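(* Let $(X,\mathcal{A})$ be a resolvable design, let $z\geq 2$, and let $\mathcal{P}_1,\dots,\mathcal{P}_z$ be $z$ distinct parallel classes. For each $s\in[z]$ choose two distinct blocks $C_{s,i_s},C_{s,j_s}\in\mathcal{P}_s$. Let $\mathcal{X}$ be the set of $2^z$ users, where the user indexed by $(a_1,\dots,a_z)$ with $a_s\in\{i_s,j_s\}$ has accessible point set $Y_{(a_1,\dots,a_z)}=C_{1,a_1}\cup\cdots\cup C_{z,a_z}$. For a user $m=(a_1,\dots,a_z)\in\mathcal{X}$ let $e_s$ denote the element of $\{i_s,j_s\}\setminus\{a_s\}$ and $f_m=C_{1,e_1}\cap\cdots\cap C_{z,e_z}$. Then for every $m\in\mathcal{X}$, $$f_m=\bigcap_{t\in\mathcal{X}\setminus\{m\}}Y_t.$$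
   Context: A resolvable design $(X,\mathcal{A})$: $X$ a finite set of points, $\mathcal{A}$ a collection of blocks (subsets of $X$ of a common size) partitioned into parallel classes, each parallel class being a set of pairwise disjoint blocks whose union is $X$. *)

theory Defs
  imports Main "HOL-Library.FuncSet" "HOL-Library.Disjoint_Sets"
begin

definition parallel_class :: "'a set \<Rightarrow> 'a set set \<Rightarrow> bool" where
  "parallel_class X P \<longleftrightarrow> disjoint P \<and> \<Union>P = X"

definition resolvable_design :: "'a set \<Rightarrow> 'a set set \<Rightarrow> 'a set set set \<Rightarrow> bool" where
  "resolvable_design X A R \<longleftrightarrow>
     finite X \<and> (\<exists>k. \<forall>B\<in>A. B \<subseteq> X \<and> card B = k) \<and>
     disjoint R \<and> \<Union>R = A \<and> (\<forall>P\<in>R. parallel_class X P)"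

definition users :: "nat \<Rightarrow> (nat \<Rightarrow> nat) \<Rightarrow> (nat \<Rightarrow> nat) \<Rightarrow> (nat \<Rightarrow> nat) set" where
  "users z i j = PiE {1..z} (\<lambda>s. {i s, j s})"

definition user_points :: "nat \<Rightarrow> (nat \<Rightarrow> nat \<Rightarrow> 'a set) \<Rightarrow> (nat \<Rightarrow> nat) \<Rightarrow> 'a set" where
  "user_points z C a = (\<Union>s\<in>{1..z}. C s (a s))"

definition other_index :: "(nat \<Rightarrow> nat) \<Rightarrow> (nat \<Rightarrow> nat) \<Rightarrow> (nat \<Rightarrow> nat) \<Rightarrow> nat \<Rightarrow> nat" where
  "other_index i j a s = (if a s = i s then j s else i s)"

definition f_set :: "nat \<Rightarrow> (nat \<Rightarrow> nat \<Rightarrow> 'a set) \<Rightarrow> (nat \<Rightarrow> nat) \<Rightarrow> (nat \<Rightarrow> nat) \<Rightarrow> (nat \<Rightarrow> nat) \<Rightarrow> 'a set" where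
  "f_set z C i j m = (\<Inter>s\<in>{1..z}. C s (other_index i j m s))"

end

theory Submission
  imports Defs
begin

text \<open>Every other user differs from m in some coordinate s, where it therefore takes the
  complementary block, so f_m lies in its point set. Conversely, for a point x outside f_m, the
  user that flips exactly the coordinates whose complementary block misses x differs from m,
  and by disjointness of the two blocks of each parallel class it does not see x.\<close>

lemma resolvable_design_blocks_disjoint:
  assumes "resolvable_design X A R" and "P \<in> R" and "B \<in> P" and "B' \<in> P" and "B \<noteq> B'"
  shows "B \<inter> B' = {}"
proof -
  have "disjoint P"
    using assms(1,2) by (simp add: resolvable_design_def parallel_class_def)
  then show ?thesis
    using assms(3-5) by (auto simp: disjoint_def)
qed

lemma other_index_in: "other_index i j a s \<in> {i s, j s}"
  by (simp add: other_index_def)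

lemma other_index_neq:
  assumes "a s \<in> {i s, j s}" and "i s \<noteq> j s"
  shows "other_index i j a s \<noteq> a s"
  using assms by (auto simp: other_index_def)

lemma users_differ_at_other_index:
  assumes "t \<in> users z i j" and "m \<in> users z i j" and "t \<noteq> m"
  obtains s where "s \<in> {1..z}" and "t s = other_index i j m s"
proof -
  obtain s where ne: "t s \<noteq> m s"
    using assms(3) by auto
  then have s: "s \<in> {1..z}"
    using assms(1,2) PiE_arb[of _ "{1..z}"] unfolding users_def by metis
  have "t s \<in> {i s, j s}" and "m s \<in> {i s, j s}"
    using assms(1,2) s by (auto simp: users_def)
  with ne have "t s = other_index i j m s"
    by (auto simp: other_index_def)
  with s show thesis
    using that by blast
qed

lemma f_set_subset_user_points:
  assumes "t \<in> users z i j" and "m \<in> users z i j" and "t \<noteq> m"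
  shows "f_set z C i j m \<subseteq> user_points z C t"
proof -
  obtain s where "s \<in> {1..z}" and "t s = other_index i j m s"
    using users_differ_at_other_index[OF assms] .
  then show ?thesis
    unfolding f_set_def user_points_def by force
qed

lemma user_avoiding_point:
  assumes disj: "\<And>s. s \<in> {1..z} \<Longrightarrow> C s (i s) \<inter> C s (j s) = {}"
    and ij: "\<And>s. s \<in> {1..z} \<Longrightarrow> i s \<noteq> j s"
    and m: "m \<in> users z i j" and x: "x \<notin> f_set z C i j m"
  obtains t where "t \<in> users z i j" and "t \<noteq> m" and "x \<notin> user_points z C t"
proof -
  let ?e = "other_index i j m"
  define t where
    "t = (\<lambda>s. if s \<in> {1..z} then if x \<in> C s (?e s) then m s else ?e s else undefined)"
  have ms: "m s \<in> {i s, j s}" if "s \<in> {1..z}" for s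
    using m that by (auto simp: users_def)
  have "t s \<in> {i s, j s}" if "s \<in> {1..z}" for s
    using ms[OF that] other_index_in[of i j m s] that by (simp add: t_def)
  then have "t \<in> users z i j"
    unfolding users_def by (auto simp: PiE_iff extensional_def t_def)
  moreover obtain s0 where s0: "s0 \<in> {1..z}" and "x \<notin> C s0 (?e s0)"
    using x by (auto simp: f_set_def)
  then have "t s0 = ?e s0"
    by (simp add: t_def)
  then have "t \<noteq> m"
    using other_index_neq[of m s0 i j, OF ms[OF s0] ij[OF s0]] by auto
  moreover have "x \<notin> C s (t s)" if s: "s \<in> {1..z}" for s
  proof (cases "x \<in> C s (?e s)")
    case True
    have "{m s, ?e s} = {i s, j s}"
      using ms[OF s] ij[OF s] by (auto simp: other_index_def)
    then have "C s (m s) \<inter> C s (?e s) = {}"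
      using disj[OF s] by (auto simp: doubleton_eq_iff)
    then show ?thesis
      using True s by (auto simp: t_def)
  next
    case False
    then show ?thesis
      using s by (simp add: t_def)
  qed
  then have "x \<notin> user_points z C t"
    by (auto simp: user_points_def)
  ultimately show thesis
    using that by blast
qed

lemma f_set_eq_Inter_other_user_points:
  assumes "\<And>s. s \<in> {1..z} \<Longrightarrow> C s (i s) \<inter> C s (j s) = {}"
    and "\<And>s. s \<in> {1..z} \<Longrightarrow> i s \<noteq> j s"
    and "m \<in> users z i j"
  shows "f_set z C i j m = (\<Inter>t\<in>users z i j - {m}. user_points z C t)"
proof
  show "f_set z C i j m \<subseteq> (\<Inter>t\<in>users z i j - {m}. user_points z C t)"
  proof (rule INT_greatest)
    fix t assume "t \<in> users z i j - {m}"
    then show "f_set z C i j m \<subseteq> user_points z C t"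
      using assms(3) by (intro f_set_subset_user_points) auto
  qed
  show "(\<Inter>t\<in>users z i j - {m}. user_points z C t) \<subseteq> f_set z C i j m"
  proof
    fix x assume x: "x \<in> (\<Inter>t\<in>users z i j - {m}. user_points z C t)"
    show "x \<in> f_set z C i j m"
    proof (rule ccontr)
      assume "x \<notin> f_set z C i j m"
      then obtain t where "t \<in> users z i j" and "t \<noteq> m" and "x \<notin> user_points z C t"
        using user_avoiding_point[OF assms] by blast
      with x show False
        by blast
    qed
  qed
qed

theorem lemma6:
  fixes X :: "'a set" and A :: "'a set set" and R :: "'a set set set"
    and z :: nat and P :: "nat \<Rightarrow> 'a set set" and C :: "nat \<Rightarrow> nat \<Rightarrow> 'a set"
    and i j :: "nat \<Rightarrow> nat"
  assumes "resolvable_design X A R"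
    and "z \<ge> 2"
    and "\<forall>s\<in>{1..z}. P s \<in> R"
    and "inj_on P {1..z}"
    and "\<forall>s\<in>{1..z}. C s (i s) \<in> P s \<and> C s (j s) \<in> P s \<and> C s (i s) \<noteq> C s (j s)"
  shows "\<forall>m\<in>users z i j. f_set z C i j m = (\<Inter>t\<in>users z i j - {m}. user_points z C t)"
proof -
  have disj: "C s (i s) \<inter> C s (j s) = {}" if "s \<in> {1..z}" for s
    using resolvable_design_blocks_disjoint[OF assms(1), of "P s"] assms(3,5) that by simp
  have ij: "i s \<noteq> j s" if "s \<in> {1..z}" for s
    using assms(5) that by metis
  show ?thesis
    by (intro ballI f_set_eq_Inter_other_user_points[OF disj ij])
qed

end
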